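(* Suppose Assumption (A) and conditions (R3) and (R4) hold. Then \[ \mathcal{G}_{q,\theta}[\tilde\mu_m,\tilde\pi_m]-\mathcal{G}_{q,\theta}[\mu,\pi]=\mathcal{O}_{\rm P}(a_m). \]
   Context: Let $Z$ be a random vector with values in $\Omega\subseteq\mathbb{R}^d$ and distribution $P$; $\mu,\pi:\Omega\to\mathbb{R}$ measurable. Fix $\alpha,\beta\in(0,1)$; $q$ satisfies $\Pr\{\mu(Z)\le q\}=\alpha$ and $\theta$ satisfies $\Pr\{\pi(Z)\le\theta\mid\mu(Z)=q\}=\beta$. For each $m$, $\tilde\mu_m,\tilde\pi_m:\Omega\to\mathbb{R}$ are random functions fitted from a sample independent of $Z$; $\Pr_m$ is probability conditional on them. For (possibly random) functions $g,h$, $\mathcal{G}_{x,y}[g,h]=\Pr_m\{h(Z)\le y\mid g(Z)=x\}$, computed conditionally on the fitted functions. $\|g\|_\infty$ is the $P$-essential supremum of $|g|$. Assumption (A): deterministic $a_m\to0$ with $\|\tilde\mu_m-\mu\|_\infty=\mathcal{O}_{\rm P}(a_m)$, $\|\tilde\pi_m-\pi\|_\infty=\mathcal{O}_{\rm P}(a_m)$ for large $m$. $\eta_m=a_m^{-1}(\tilde\mu_m-\mu)$, $\gamma_m=a_m^{-1}(\tilde\pi_m-\pi)$. (R3): for large $m$, conditionally, $(\mu(Z),\eta_m(Z),\pi(Z),\gamma_m(Z))$ has joint density $h_m(x,u,y,v)$ with $\partial_xh_m,\partial_yh_m$ existing for all arguments; $h^Y_m(x,u,y,v)=\int_{-\infty}^yh_m(x,u,\check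 y,v)d\check y$ has $\partial_xh^Y_m,\partial_x^2h^Y_m$ existing; nonnegative $\bar h_{m,i}(u,v),\bar h^Y_{m,i}(u,v)$ ($i=0,1,2$) satisfy $h_m\le\bar h_{m,0}$, $|\partial_xh_m|\le\bar h_{m,1}$, $|\partial_yh_m|\le\bar h_{m,2}$, $h^Y_m\le\bar h^Y_{m,0}$, $|\partial_xh^Y_m|\le\bar h^Y_{m,1}$, $|\partial_x^2h^Y_m|\le\bar h^Y_{m,2}$ for all $x,u,y,v$, with $\sup_m\iint(1+|u|+|v|)^r\bar h_{m,i}\,du\,dv<\infty$ and $\sup_m\iint(1+|u|+|v|)^r\bar h^Y_{m,i}\,du\,dv<\infty$ for $r=1,2$. (R4): $h^X_m(x,u,y,v)=\int_{-\infty}^xh_m(\check x,u,y,v)d\check x$ has $\partial_yh^X_m$ existing for all arguments; nonnegative $\bar h^X_{m,0},\bar h^X_{m,1}$ of $(u,v)$ satisfy $h^X_m\le\bar h^X_{m,0}$, $|\partial_yh^X_m|\le\bar h^X_{m,1}$, and $\sup_m\iint(1+|u|+|v|)\bar h^X_{m,i}\,du\,dv<\infty$, $i=0,1$. *)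

theory Defs
  imports "HOL-Probability.Probability"
begin

text \<open>Conditional probability Pr{h(Z) <= y | g(Z) = x} under the distribution M of Z,
  evaluated pointwise at g(Z) = x as the limit of elementary conditional probabilities
  given |g(Z) - x| <= eps, eps -> 0+.\<close>
definition cond_prob_at ::
  "'a measure \<Rightarrow> ('a \<Rightarrow> real) \<Rightarrow> ('a \<Rightarrow> real) \<Rightarrow> real \<Rightarrow> real \<Rightarrow> real" where
  "cond_prob_at M g h x y =
     Lim (at_right 0)
       (\<lambda>\<epsilon>::real. measure M {z \<in> space M. h z \<le> y \<and> \<bar>g z - x\<bar> \<le> \<epsilon>}
                / measure M {z \<in> space M. \<bar>g z - x\<bar> \<le> \<epsilon>})"

definition ess_norm :: "'a measure \<Rightarrow> ('a \<Rightarrow> real) \<Rightarrow> ereal" where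
  "ess_norm M f = esssup M (\<lambda>z. ereal \<bar>f z\<bar>)"

text \<open>Stochastic boundedness X_m = O_P(a_m) w.r.t. the probability space Q of the
  fitting sample (outer probability, so no measurability of X_m is needed).\<close>
definition bigO_P :: "'w measure \<Rightarrow> (nat \<Rightarrow> 'w \<Rightarrow> ereal) \<Rightarrow> (nat \<Rightarrow> real) \<Rightarrow> bool" where
  "bigO_P Q X a \<longleftrightarrow>
     (\<forall>\<epsilon>>0. \<exists>C::real. \<exists>N. \<forall>m\<ge>N. \<exists>A\<in>sets Q.
        {\<omega> \<in> space Q. \<bar>X m \<omega>\<bar> > ereal (C * a m)} \<subseteq> A \<and> measure Q A < \<epsilon>)"

end

theory Submission
  imports Defs
begin

(* Write c = a_m, eta = (mu_m~ - mu) / c and gamma = (pi_m~ - pi) / c, so that the fitted functions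
   are mu + c eta and pi + c gamma. Integrating out the joint density h_m shows that mu + c eta has,
   on the event pi + c gamma <= y, the sub-density
     G_c(y, x) = integral of h^Y_m(x - c u, u, y - c v, v) over (u, v),
   which is Lipschitz in x; so the conditional probability given mu + c eta = q is the ratio
   G_c(theta, q) / G_c(infinity, q). Shifting the arguments of h^Y_m by (c u, c v) moves numerator and
   denominator by at most c times the weighted envelope integrals of (R3), and the denominator at
   c = 0 is the positive density of mu(Z) at q. Hence the difference is at most a constant times a_m.
   Because (R3) is assumed for every fitted pair, this bound is deterministic: the O_P statement holds
   with empty exceptional sets. *)

lemma tendsto_window_average:
  fixes f :: "real \<Rightarrow> real"
  assumes bound: "\<And>e. 0 < e \<Longrightarrow> \<bar>f e - 2 * e * l\<bar> \<le> 2 * C * e * e"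
  shows "((\<lambda>e. f e / (2 * e)) \<longlongrightarrow> l) (at_right 0)"
proof (rule tendsto_sandwich)
  have close: "\<bar>f e / (2 * e) - l\<bar> \<le> C * e" if e: "0 < e" for e
  proof -
    have "\<bar>f e / (2 * e) - l\<bar> = \<bar>f e - 2 * e * l\<bar> / (2 * e)"
      using e by (simp add: field_simps abs_div)
    also have "\<dots> \<le> (2 * C * e * e) / (2 * e)"
      using bound[OF e] e by (intro divide_right_mono) auto
    finally show ?thesis using e by simp
  qed
  have pos: "eventually (\<lambda>e. 0 < e) (at_right (0::real))"
    by (simp add: eventually_at_right_less)
  show "eventually (\<lambda>e. l - C * e \<le> f e / (2 * e)) (at_right 0)"
    using pos by eventually_elim (use close in \<open>force simp: abs_le_iff\<close>)
  show "eventually (\<lambda>e. f e / (2 * e) \<le> l + C * e) (at_right 0)"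
    using pos by eventually_elim (use close in \<open>force simp: abs_le_iff\<close>)
  show "((\<lambda>e. l - C * e) \<longlongrightarrow> l) (at_right 0)" "((\<lambda>e. l + C * e) \<longlongrightarrow> l) (at_right 0)"
    by (auto intro!: tendsto_eq_intros)
qed

lemma abs_quotient_diff_le:
  fixes N0 N1 D1 d f0 B :: real
  assumes f0: "0 < f0" and D1: "\<bar>D1 - f0\<bar> \<le> d" and d: "d \<le> f0 / 2"
    and N0: "0 \<le> N0" "N0 \<le> B" and N1: "\<bar>N1 - N0\<bar> \<le> d"
  shows "\<bar>N1 / D1 - N0 / f0\<bar> \<le> d * (2 / f0 + 2 * B / (f0 * f0))"
proof -
  have d0: "0 \<le> d" using D1 by linarith
  have D1_ge: "f0 / 2 \<le> D1" using D1 d by (simp add: abs_le_iff)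
  then have D1_pos: "0 < D1" using f0 by linarith
  have "\<bar>N1 / D1 - N0 / f0\<bar> = \<bar>(N1 - N0) * f0 + N0 * (f0 - D1)\<bar> / (f0 * D1)"
    using D1_pos f0 by (simp add: field_simps abs_div abs_mult)
  also have "\<dots> \<le> (d * f0 + B * d) / (f0 * (f0 / 2))"
  proof (rule frac_le)
    have "\<bar>(N1 - N0) * f0\<bar> \<le> d * f0" using N1 f0 by (simp add: abs_mult mult_right_mono)
    moreover have "\<bar>N0 * (f0 - D1)\<bar> \<le> B * d"
      using N0 D1 by (simp add: abs_mult abs_minus_commute mult_mono)
    ultimately show "\<bar>(N1 - N0) * f0 + N0 * (f0 - D1)\<bar> \<le> d * f0 + B * d"
      using abs_triangle_ineq order_trans by fastforce
    show "0 \<le> d * f0 + B * d" using d0 f0 N0 by simp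
    show "0 < f0 * (f0 / 2)" using f0 by simp
    show "f0 * (f0 / 2) \<le> f0 * D1" using D1_ge f0 by (simp add: mult_left_mono)
  qed
  also have "\<dots> = d * (2 / f0 + 2 * B / (f0 * f0))" using f0 by (simp add: field_simps)
  finally show ?thesis .
qed

lemma nn_integral_interval_lipschitz:
  fixes g :: "real \<Rightarrow> real"
  assumes e: "0 < e" and g_nonneg: "\<And>x. 0 \<le> g x" and L: "0 \<le> L"
    and lip: "\<And>x. \<bar>g x - g q\<bar> \<le> L * \<bar>x - q\<bar>"
    and N: "ennreal N = (\<integral>\<^sup>+x. indicator {q - e..q + e} x * ennreal (g x) \<partial>lborel)"
    and N_nonneg: "0 \<le> N"
  shows "\<bar>N - 2 * e * g q\<bar> \<le> 2 * L * e * e"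
proof -
  define I where "I = {q - e..q + e}"
  have near: "g q - L * e \<le> g x \<and> g x \<le> g q + L * e" if "x \<in> I" for x
  proof -
    have "L * \<bar>x - q\<bar> \<le> L * e" using that L by (intro mult_left_mono) (auto simp: I_def)
    then show ?thesis using lip[of x] by (simp add: abs_le_iff)
  qed
  have const: "(\<integral>\<^sup>+x. ennreal b * indicator I x \<partial>lborel) = ennreal (b * (2 * e))" if "0 \<le> b" for b
    using that e by (simp add: I_def nn_integral_cmult_indicator ennreal_mult)
  have "ennreal N \<le> (\<integral>\<^sup>+x. ennreal (g q + L * e) * indicator I x \<partial>lborel)"
    unfolding N I_def[symmetric] by (intro nn_integral_mono) (auto simp: indicator_def near intro: ennreal_leI)
  also have "\<dots> = ennreal ((g q + L * e) * (2 * e))"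
    using g_nonneg[of q] L e by (intro const) simp
  finally have "ennreal N \<le> ennreal ((g q + L * e) * (2 * e))" .
  moreover have "0 \<le> (g q + L * e) * (2 * e)" using g_nonneg[of q] L e by simp
  ultimately have upper: "N \<le> (g q + L * e) * (2 * e)" by simp
  have lower: "(g q - L * e) * (2 * e) \<le> N"
  proof (cases "g q - L * e \<le> 0")
    case True
    then have "(g q - L * e) * (2 * e) \<le> 0" using e by (simp add: mult_nonpos_nonneg)
    then show ?thesis using N_nonneg by linarith
  next
    case False
    have "ennreal ((g q - L * e) * (2 * e)) = (\<integral>\<^sup>+x. ennreal (g q - L * e) * indicator I x \<partial>lborel)"
      using False by (intro const[symmetric]) simp
    also have "\<dots> \<le> ennreal N"
      unfolding N I_def[symmetric] by (intro nn_integral_mono) (auto simp: indicator_def near intro: ennreal_leI)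
    finally show ?thesis using N_nonneg by simp
  qed
  show ?thesis using upper lower by (simp add: abs_le_iff algebra_simps)
qed

lemma abs_integral_diff_le:
  fixes f g b :: "'a \<Rightarrow> real"
  assumes "integrable M f" "integrable M g" "integrable M b" "\<And>x. \<bar>f x - g x\<bar> \<le> b x"
  shows "\<bar>integral\<^sup>L M f - integral\<^sup>L M g\<bar> \<le> integral\<^sup>L M b"
proof -
  have "\<bar>integral\<^sup>L M f - integral\<^sup>L M g\<bar> = \<bar>\<integral>x. f x - g x \<partial>M\<bar>"
    using assms by simp
  also have "\<dots> \<le> (\<integral>x. \<bar>f x - g x\<bar> \<partial>M)" by (rule integral_abs_bound)
  also have "\<dots> \<le> integral\<^sup>L M b" using assms by (intro integral_mono) auto
  finally show ?thesis .
qed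

lemma integrable_if_nn_integral_le:
  fixes f :: "'a \<Rightarrow> real"
  assumes f: "f \<in> borel_measurable M" and nonneg: "\<And>x. 0 \<le> f x"
    and le: "(\<integral>\<^sup>+x. ennreal (f x) \<partial>M) \<le> ennreal C" and C: "0 \<le> C"
  shows "integrable M f" "integral\<^sup>L M f \<le> C"
proof -
  show "integrable M f"
    using f nonneg le by (intro integrableI_nonneg) (auto simp: le_less_trans)
  have "integral\<^sup>L M f = enn2real (\<integral>\<^sup>+x. ennreal (f x) \<partial>M)"
    using f nonneg by (intro integral_eq_nn_integral) auto
  also have "\<dots> \<le> C" using enn2real_mono[OF le] C by simp
  finally show "integral\<^sup>L M f \<le> C" .
qed

lemma weighted_envelope_integrable:
  fixes B w :: "real \<Rightarrow> real \<Rightarrow> real"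
  assumes B: "(\<lambda>(u, v). B u v) \<in> borel_measurable lborel"
    and w: "(\<lambda>(u, v). w u v) \<in> borel_measurable lborel"
    and B_nonneg: "\<And>u v. 0 \<le> B u v" and w_nonneg: "\<And>u v. 0 \<le> w u v"
    and w_le: "\<And>u v. w u v \<le> 1 + \<bar>u\<bar> + \<bar>v\<bar>"
    and weighted: "(\<integral>\<^sup>+ (u, v). ennreal ((1 + \<bar>u\<bar> + \<bar>v\<bar>) * B u v) \<partial>lborel) \<le> ennreal W"
    and W: "0 \<le> W"
  shows "integrable lborel (\<lambda>p. w (fst p) (snd p) * B (fst p) (snd p))"
    "(\<integral>p. w (fst p) (snd p) * B (fst p) (snd p) \<partial>lborel) \<le> W"
proof -
  have meas: "(\<lambda>p. w (fst p) (snd p) * B (fst p) (snd p)) \<in> borel_measurable lborel"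
    using B w by (intro borel_measurable_times) (simp_all add: case_prod_beta')
  have "(\<integral>\<^sup>+p. ennreal (w (fst p) (snd p) * B (fst p) (snd p)) \<partial>lborel)
      \<le> (\<integral>\<^sup>+ (u, v). ennreal ((1 + \<bar>u\<bar> + \<bar>v\<bar>) * B u v) \<partial>lborel)"
    by (auto intro!: nn_integral_mono ennreal_leI mult_right_mono simp: B_nonneg w_le)
  also note weighted
  finally have le: "(\<integral>\<^sup>+p. ennreal (w (fst p) (snd p) * B (fst p) (snd p)) \<partial>lborel) \<le> ennreal W" .
  show "integrable lborel (\<lambda>p. w (fst p) (snd p) * B (fst p) (snd p))"
    "(\<integral>p. w (fst p) (snd p) * B (fst p) (snd p) \<partial>lborel) \<le> W"
    using integrable_if_nn_integral_le[OF meas _ le W] B_nonneg w_nonneg by simp_all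
qed

lemma bigO_P_if_eventually_le:
  assumes "\<forall>\<^sub>F m in sequentially. \<forall>\<omega>\<in>space Q. \<bar>X m \<omega>\<bar> \<le> ereal (C * a m)"
  shows "bigO_P Q X a"
  unfolding bigO_P_def
proof (intro allI impI)
  fix \<epsilon> :: real
  assume "0 < \<epsilon>"
  obtain N where "\<And>m. N \<le> m \<Longrightarrow> \<forall>\<omega>\<in>space Q. \<bar>X m \<omega>\<bar> \<le> ereal (C * a m)"
    using assms by (auto simp: eventually_sequentially)
  then have "\<forall>m\<ge>N. {\<omega> \<in> space Q. ereal (C * a m) < \<bar>X m \<omega>\<bar>} \<subseteq> {}"
    by (auto simp: not_less)
  with \<open>0 < \<epsilon>\<close> show "\<exists>C N. \<forall>m\<ge>N. \<exists>A\<in>sets Q. {\<omega> \<in> space Q. ereal (C * a m) < \<bar>X m \<omega>\<bar>} \<subseteq> A \<and> measure Q A < \<epsilon>"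
    by (intro exI[of _ C] exI[of _ N] allI impI bexI[of _ "{}"]) auto
qed

lemma borel_measurable_borel_prod:
  fixes f :: "'a::second_countable_topology \<times> 'b::second_countable_topology \<Rightarrow> 'c::topological_space"
  shows "f \<in> borel_measurable (borel \<Otimes>\<^sub>M borel) \<Longrightarrow> f \<in> borel_measurable borel"
  by (simp add: borel_prod)

lemma borel_measurable_lborel_prod:
  fixes f :: "real \<times> real \<Rightarrow> 'c::topological_space"
  shows "f \<in> borel_measurable (borel \<Otimes>\<^sub>M borel) \<Longrightarrow> f \<in> borel_measurable (lborel \<Otimes>\<^sub>M lborel)"
  using measurable_cong_sets[OF sets_pair_measure_cong[OF sets_lborel sets_lborel] refl] by blast

lemma borel_measurable_lborel_prod_pair:
  fixes f :: "real \<times> (real \<times> real) \<Rightarrow> 'c::topological_space"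
  shows "f \<in> borel_measurable (borel \<Otimes>\<^sub>M (borel \<Otimes>\<^sub>M borel)) \<Longrightarrow> f \<in> borel_measurable (lborel \<Otimes>\<^sub>M lborel)"
proof -
  have "sets (lborel :: (real \<times> real) measure) = sets (borel \<Otimes>\<^sub>M borel)"
    by (simp only: sets_lborel borel_prod)
  then show "f \<in> borel_measurable (borel \<Otimes>\<^sub>M (borel \<Otimes>\<^sub>M borel)) \<Longrightarrow> f \<in> borel_measurable (lborel \<Otimes>\<^sub>M lborel)"
    using measurable_cong_sets[OF sets_pair_measure_cong[OF sets_lborel] refl] by blast
qed

lemma nn_integral_lborel_pair:
  fixes g :: "'a::euclidean_space \<times> 'b::euclidean_space \<Rightarrow> ennreal"
  assumes "g \<in> borel_measurable borel"
  shows "integral\<^sup>N lborel g = (\<integral>\<^sup>+x. \<integral>\<^sup>+y. g (x, y) \<partial>lborel \<partial>lborel)"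
proof -
  have "integral\<^sup>N lborel g = integral\<^sup>N (lborel \<Otimes>\<^sub>M lborel) g" by (simp add: lborel_prod)
  also have "\<dots> = (\<integral>\<^sup>+x. \<integral>\<^sup>+y. g (x, y) \<partial>lborel \<partial>lborel)"
    by (rule lborel.nn_integral_fst[symmetric]) (simp add: lborel_prod assms)
  finally show ?thesis .
qed

lemma nn_integral_lborel_quadruple:
  fixes f :: "real \<times> real \<times> real \<times> real \<Rightarrow> ennreal"
  assumes [measurable]: "f \<in> borel_measurable borel"
  shows "integral\<^sup>N lborel f
    = (\<integral>\<^sup>+x. \<integral>\<^sup>+u. \<integral>\<^sup>+y. \<integral>\<^sup>+v. f (x, u, y, v) \<partial>lborel \<partial>lborel \<partial>lborel \<partial>lborel)"
  by (simp add: nn_integral_lborel_pair cong: nn_integral_cong)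

lemma nn_integral_cong_where_finite:
  assumes "F \<in> borel_measurable M" "(\<integral>\<^sup>+x. F x \<partial>M) \<noteq> \<infinity>"
    and "\<And>x. F x \<noteq> \<infinity> \<Longrightarrow> G1 x = G2 x"
  shows "(\<integral>\<^sup>+x. G1 x \<partial>M) = (\<integral>\<^sup>+x. G2 x \<partial>M)"
proof -
  have "AE x in M. F x \<noteq> \<infinity>" using nn_integral_PInf_AE[OF assms(1,2)] .
  then have "AE x in M. G1 x = G2 x" by eventually_elim (use assms(3) in auto)
  then show ?thesis by (rule nn_integral_cong_AE)
qed

lemma uniform_weighted_envelope:
  fixes hb :: "nat \<Rightarrow> real \<Rightarrow> real \<Rightarrow> real"
  assumes "(\<forall>m u v. 0 \<le> hb m u v) \<and> (\<forall>m. (\<lambda>(u, v). hb m u v) \<in> borel_measurable lborel)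
      \<and> (\<forall>r\<in>{1::nat, 2}. \<exists>C::real. \<forall>m.
           (\<integral>\<^sup>+ (u, v). ennreal ((1 + \<bar>u\<bar> + \<bar>v\<bar>) ^ r * hb m u v) \<partial>lborel) \<le> ennreal C)"
  obtains W where "0 \<le> W" "\<And>m. (\<lambda>(u, v). hb m u v) \<in> borel_measurable lborel"
    "\<And>m. (\<integral>\<^sup>+ (u, v). ennreal ((1 + \<bar>u\<bar> + \<bar>v\<bar>) * hb m u v) \<partial>lborel) \<le> ennreal W"
proof -
  obtain C where C: "\<And>m. (\<integral>\<^sup>+ (u, v). ennreal ((1 + \<bar>u\<bar> + \<bar>v\<bar>) * hb m u v) \<partial>lborel) \<le> ennreal C"
    using bspec[OF assms[THEN conjunct2, THEN conjunct2], of 1] by auto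
  have "ennreal C \<le> ennreal (max C 0)" by (rule ennreal_leI) simp
  with C assms show ?thesis by (intro that[of "max C 0"]) (auto intro: order_trans)
qed

text \<open>One fitted pair: \<open>(\<mu>, \<eta>, \<pi>, \<gamma>)\<close> stands for \<open>(\<mu>(Z), \<eta>\<^sub>m(Z), \<pi>(Z), \<gamma>\<^sub>m(Z))\<close>
  with density \<open>H = h\<^sub>m\<close>; of (R3) only the envelopes \<open>B0\<close>, \<open>BY0\<close>, \<open>BY1\<close> of \<open>h\<^sub>m\<close>, \<open>h\<^sup>Y\<^sub>m\<close> and
  \<open>\<partial>\<^sub>x h\<^sup>Y\<^sub>m\<close> are needed.\<close>

locale joint_density_perturbation =
  fixes P :: "'a measure" and \<mu> \<eta> \<pi> \<gamma> :: "'a \<Rightarrow> real"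
    and H :: "real \<Rightarrow> real \<Rightarrow> real \<Rightarrow> real \<Rightarrow> real"
    and B0 BY0 BY1 :: "real \<Rightarrow> real \<Rightarrow> real" and W0 WY0 WY1 :: real
  assumes P_prob_space: "prob_space P"
    and distributed: "distributed P lborel (\<lambda>z. (\<mu> z, \<eta> z, \<pi> z, \<gamma> z)) (\<lambda>(x, u, y, v). ennreal (H x u y v))"
    and H_nonneg: "\<And>x u y v. 0 \<le> H x u y v"
    and H_le: "\<And>x u y v. H x u y v \<le> B0 u v"
    and lower_integral_le: "\<And>x u y v. (LINT t:{..y}|lborel. H x u t v) \<le> BY0 u v"
    and lower_integral_differentiable:
      "\<And>x u y v. (\<lambda>x'. LINT t:{..y}|lborel. H x' u t v) differentiable at x"
    and deriv_lower_integral_le: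
      "\<And>x u y v. \<bar>deriv (\<lambda>x'. LINT t:{..y}|lborel. H x' u t v) x\<bar> \<le> BY1 u v"
    and B0_measurable: "(\<lambda>(u, v). B0 u v) \<in> borel_measurable lborel"
    and BY0_measurable: "(\<lambda>(u, v). BY0 u v) \<in> borel_measurable lborel"
    and BY1_measurable: "(\<lambda>(u, v). BY1 u v) \<in> borel_measurable lborel"
    and B0_weighted: "(\<integral>\<^sup>+ (u, v). ennreal ((1 + \<bar>u\<bar> + \<bar>v\<bar>) * B0 u v) \<partial>lborel) \<le> ennreal W0"
    and BY0_weighted: "(\<integral>\<^sup>+ (u, v). ennreal ((1 + \<bar>u\<bar> + \<bar>v\<bar>) * BY0 u v) \<partial>lborel) \<le> ennreal WY0"
    and BY1_weighted: "(\<integral>\<^sup>+ (u, v). ennreal ((1 + \<bar>u\<bar> + \<bar>v\<bar>) * BY1 u v) \<partial>lborel) \<le> ennreal WY1"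
    and W_nonneg: "0 \<le> W0" "0 \<le> WY0" "0 \<le> WY1"
begin

text \<open>Being a Bochner integral, it is \<open>0\<close> wherever \<open>H x u \<cdot> v\<close> is not
  integrable, so computations with Tonelli's theorem go through \<open>HY_ennreal\<close> instead.\<close>

definition "HY x u y v = (LINT t:{..y}|lborel. H x u t v)"
definition "HY_ennreal x u y v = (\<integral>\<^sup>+t. indicator {..y} t * ennreal (H x u t v) \<partial>lborel)"
definition "H_mass x u v = (\<integral>\<^sup>+t. ennreal (H x u t v) \<partial>lborel)"

lemma H_borel_measurable:
  "(\<lambda>w. H (fst w) (fst (snd w)) (fst (snd (snd w))) (snd (snd (snd w)))) \<in> borel_measurable borel"
proof -
  have "(\<lambda>w. enn2real ((\<lambda>(x, u, y, v). ennreal (H x u y v)) w)) \<in> borel_measurable borel"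
    using distributed_borel_measurable[OF distributed] by simp
  moreover have "(\<lambda>w. enn2real ((\<lambda>(x, u, y, v). ennreal (H x u y v)) w))
      = (\<lambda>w. H (fst w) (fst (snd w)) (fst (snd (snd w))) (snd (snd (snd w))))"
    by (auto simp: H_nonneg split: prod.splits)
  ultimately show ?thesis by simp
qed

lemma borel_measurable_H[measurable]:
  assumes [measurable]: "f \<in> borel_measurable M" "g \<in> borel_measurable M"
    "k \<in> borel_measurable M" "l \<in> borel_measurable M"
  shows "(\<lambda>z. H (f z) (g z) (k z) (l z)) \<in> borel_measurable M"
proof -
  have "(\<lambda>z. (f z, g z, k z, l z)) \<in> M \<rightarrow>\<^sub>M borel" by measurable
  from measurable_compose[OF this H_borel_measurable] show ?thesis by simp
qed

lemma borel_measurable_HY_ennreal[measurable]: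
  assumes [measurable]: "f \<in> borel_measurable M" "g \<in> borel_measurable M"
    "k \<in> borel_measurable M" "l \<in> borel_measurable M"
  shows "(\<lambda>z. HY_ennreal (f z) (g z) (k z) (l z)) \<in> borel_measurable M"
proof -
  have "(\<lambda>(z, t). (if t \<le> k z then 1 else 0) * ennreal (H (f z) (g z) t (l z)))
      \<in> borel_measurable (M \<Otimes>\<^sub>M borel)"
    by measurable
  then have "(\<lambda>(z, t). indicator {..k z} t * ennreal (H (f z) (g z) t (l z)))
      \<in> borel_measurable (M \<Otimes>\<^sub>M lborel)"
    using measurable_cong_sets[OF sets_pair_measure_cong[OF refl sets_lborel] refl]
    by (simp add: indicator_def[abs_def] atMost_def)
  then show ?thesis unfolding HY_ennreal_def by (rule lborel.borel_measurable_nn_integral)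
qed

lemma borel_measurable_H_mass[measurable]:
  assumes [measurable]: "f \<in> borel_measurable M" "g \<in> borel_measurable M" "l \<in> borel_measurable M"
  shows "(\<lambda>z. H_mass (f z) (g z) (l z)) \<in> borel_measurable M"
  unfolding H_mass_def by measurable

lemma HY_eq_enn2real: "HY x u y v = enn2real (HY_ennreal x u y v)"
proof -
  have "HY x u y v = (\<integral>t. indicator {..y} t * H x u t v \<partial>lborel)"
    unfolding HY_def set_lebesgue_integral_def by simp
  also have "\<dots> = enn2real (\<integral>\<^sup>+t. ennreal (indicator {..y} t * H x u t v) \<partial>lborel)"
    by (rule integral_eq_nn_integral) (auto simp: H_nonneg)
  also have "\<dots> = enn2real (HY_ennreal x u y v)" unfolding HY_ennreal_def
    by (intro arg_cong[where f=enn2real] nn_integral_cong) (auto simp: indicator_def)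
  finally show ?thesis .
qed

lemma borel_measurable_HY[measurable]:
  assumes [measurable]: "f \<in> borel_measurable M" "g \<in> borel_measurable M"
    "k \<in> borel_measurable M" "l \<in> borel_measurable M"
  shows "(\<lambda>z. HY (f z) (g z) (k z) (l z)) \<in> borel_measurable M"
  unfolding HY_eq_enn2real by measurable

lemma HY_nonneg: "0 \<le> HY x u y v"
  unfolding HY_eq_enn2real by simp

lemma HY_le: "HY x u y v \<le> BY0 u v"
  unfolding HY_def by (rule lower_integral_le)

lemma B0_nonneg: "0 \<le> B0 u v"
  using H_nonneg[of 0 u 0 v] H_le[of 0 u 0 v] by linarith

lemma BY0_nonneg: "0 \<le> BY0 u v"
  using HY_nonneg[of 0 u 0 v] HY_le[of 0 u 0 v] by linarith

lemma BY1_nonneg: "0 \<le> BY1 u v"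
  using deriv_lower_integral_le[where x=0 and u=u and y=0 and v=v] by linarith

lemma HY_ennreal_mono: "y1 \<le> y2 \<Longrightarrow> HY_ennreal x u y1 v \<le> HY_ennreal x u y2 v"
  unfolding HY_ennreal_def by (intro nn_integral_mono) (auto simp: indicator_def)

lemma HY_ennreal_le_H_mass: "HY_ennreal x u y v \<le> H_mass x u v"
  unfolding HY_ennreal_def H_mass_def by (intro nn_integral_mono) (auto simp: indicator_def)

lemma HY_ennreal_increment_le:
  assumes "y1 \<le> y2"
  shows "HY_ennreal x u y2 v \<le> HY_ennreal x u y1 v + ennreal (B0 u v * (y2 - y1))"
proof -
  have "HY_ennreal x u y2 v
      \<le> (\<integral>\<^sup>+t. indicator {..y1} t * ennreal (H x u t v) + ennreal (B0 u v) * indicator {y1<..y2} t \<partial>lborel)"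
    unfolding HY_ennreal_def
    by (intro nn_integral_mono) (auto simp: indicator_def H_le intro: ennreal_leI)
  also have "\<dots> = HY_ennreal x u y1 v + ennreal (B0 u v) * emeasure lborel {y1<..y2}"
    unfolding HY_ennreal_def by (subst nn_integral_add) (auto simp: nn_integral_cmult_indicator)
  also have "\<dots> = HY_ennreal x u y1 v + ennreal (B0 u v * (y2 - y1))"
    using assms B0_nonneg by (simp add: ennreal_mult)
  finally show ?thesis .
qed

text \<open>A single finite value of \<open>HY_ennreal\<close> makes all of them finite, and then the bound
  on \<open>HY\<close> bounds the total mass by monotone convergence.\<close>

lemma H_mass_le_if_finite:
  assumes "HY_ennreal x u y0 v \<noteq> \<infinity>"
  shows "H_mass x u v \<le> ennreal (BY0 u v)"
proof -
  define f where "f n t = indicator {..y0 + real n} t * ennreal (H x u t v)" for n t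
  have inc: "incseq f"
    unfolding f_def incseq_def le_fun_def by (auto simp: indicator_def)
  have meas: "f n \<in> borel_measurable lborel" for n
    unfolding f_def by measurable
  have sup: "(SUP n. f n t) = ennreal (H x u t v)" for t
  proof (rule antisym)
    show "(SUP n. f n t) \<le> ennreal (H x u t v)"
      by (rule SUP_least) (auto simp: f_def indicator_def)
    obtain n :: nat where "t - y0 \<le> real n" using real_arch_simple by blast
    then have "f n t = ennreal (H x u t v)" by (simp add: f_def)
    then show "ennreal (H x u t v) \<le> (SUP n. f n t)" by (metis SUP_upper UNIV_I)
  qed
  have "H_mass x u v = (SUP n. integral\<^sup>N lborel (f n))"
    unfolding H_mass_def sup[symmetric] by (rule nn_integral_monotone_convergence_SUP[OF inc meas])
  also have "\<dots> \<le> ennreal (BY0 u v)"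
  proof (rule SUP_least)
    fix n
    have "HY_ennreal x u (y0 + real n) v \<le> HY_ennreal x u y0 v + ennreal (B0 u v * real n)"
      using HY_ennreal_increment_le[of y0 "y0 + real n" x u v] by simp
    then have "HY_ennreal x u (y0 + real n) v \<noteq> \<infinity>"
      using assms by (auto simp: top_unique)
    then have "integral\<^sup>N lborel (f n) = ennreal (HY x u (y0 + real n) v)"
      unfolding f_def HY_eq_enn2real HY_ennreal_def by (simp add: ennreal_enn2real_if)
    also have "\<dots> \<le> ennreal (BY0 u v)" by (intro ennreal_leI HY_le)
    finally show "integral\<^sup>N lborel (f n) \<le> ennreal (BY0 u v)" .
  qed
  finally show ?thesis .
qed

lemma HY_ennreal_eq_HY: "H_mass x u v \<noteq> \<infinity> \<Longrightarrow> HY_ennreal x u y v = ennreal (HY x u y v)"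
  using HY_ennreal_le_H_mass[of x u y v]
  by (auto simp: HY_eq_enn2real ennreal_enn2real_if top_unique)

lemma HY_eq_0_if_H_mass_infinite:
  assumes "H_mass x u v = \<infinity>"
  shows "HY x u y v = 0"
proof -
  have "HY_ennreal x u y v = \<infinity>"
    using H_mass_le_if_finite[of x u y v] assms by (auto simp: top_unique)
  then show ?thesis unfolding HY_eq_enn2real by simp
qed

lemma HY_lipschitz_y: "\<bar>HY x u y1 v - HY x u y2 v\<bar> \<le> B0 u v * \<bar>y1 - y2\<bar>"
proof -
  have "\<bar>HY x u y1 v - HY x u y2 v\<bar> \<le> B0 u v * (y2 - y1)" if y: "y1 \<le> y2" for y1 y2
  proof (cases "H_mass x u v = \<infinity>")
    case True
    then show ?thesis using HY_eq_0_if_H_mass_infinite B0_nonneg y by simp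
  next
    case False
    have "ennreal (HY x u y2 v) \<le> ennreal (HY x u y1 v) + ennreal (B0 u v * (y2 - y1))"
      using HY_ennreal_increment_le[OF y, of x u v] HY_ennreal_eq_HY[OF False] by simp
    then have "HY x u y2 v \<le> HY x u y1 v + B0 u v * (y2 - y1)"
      using HY_nonneg B0_nonneg y by (simp add: ennreal_plus[symmetric] del: ennreal_plus)
    moreover have "HY x u y1 v \<le> HY x u y2 v"
      using HY_ennreal_mono[OF y, of x u v] HY_ennreal_eq_HY[OF False] HY_nonneg by simp
    ultimately show ?thesis by (simp add: abs_if)
  qed
  from this[of y1 y2] this[of y2 y1] show ?thesis
    by (cases "y1 \<le> y2") (simp_all add: abs_minus_commute)
qed

lemma HY_lipschitz_x: "\<bar>HY x1 u y v - HY x2 u y v\<bar> \<le> BY1 u v * \<bar>x1 - x2\<bar>"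
proof -
  have "\<bar>HY x1 u y v - HY x2 u y v\<bar> \<le> BY1 u v * (x2 - x1)" if x: "x1 < x2" for x1 x2
  proof -
    have "\<exists>z. x1 < z \<and> z < x2 \<and> HY x2 u y v - HY x1 u y v = (x2 - x1) * deriv (\<lambda>x'. HY x' u y v) z"
      by (rule MVT2[OF x])
        (use lower_integral_differentiable DERIV_deriv_iff_real_differentiable in \<open>unfold HY_def, blast\<close>)
    then obtain z where z: "HY x2 u y v - HY x1 u y v = (x2 - x1) * deriv (\<lambda>x'. HY x' u y v) z"
      by blast
    have "\<bar>deriv (\<lambda>x'. HY x' u y v) z\<bar> \<le> BY1 u v"
      unfolding HY_def by (rule deriv_lower_integral_le)
    then have "\<bar>(x2 - x1) * deriv (\<lambda>x'. HY x' u y v) z\<bar> \<le> (x2 - x1) * BY1 u v"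
      using x by (simp add: abs_mult mult_left_mono)
    then show ?thesis using z by (simp add: abs_minus_commute mult.commute)
  qed
  from this[of x1 x2] this[of x2 x1] show ?thesis
    by (cases x1 x2 rule: linorder_cases) (simp_all add: abs_minus_commute)
qed

lemma envelope_integrable:
  assumes "B \<in> {B0, BY0, BY1}"
    and w: "(\<lambda>(u, v). w u v) \<in> borel_measurable lborel"
    and "\<And>u v. 0 \<le> w u v" "\<And>u v. w u v \<le> 1 + \<bar>u\<bar> + \<bar>v\<bar>"
  shows "integrable lborel (\<lambda>p. w (fst p) (snd p) * B (fst p) (snd p))"
proof -
  have "(\<lambda>(u, v). B u v) \<in> borel_measurable lborel" "\<And>u v. 0 \<le> B u v"
    "\<exists>W. (\<integral>\<^sup>+ (u, v). ennreal ((1 + \<bar>u\<bar> + \<bar>v\<bar>) * B u v) \<partial>lborel) \<le> ennreal W \<and> 0 \<le> W"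
    using assms(1) B0_measurable BY0_measurable BY1_measurable B0_nonneg BY0_nonneg BY1_nonneg
      B0_weighted BY0_weighted BY1_weighted W_nonneg by auto
  then show ?thesis
    using weighted_envelope_integrable(1)[OF _ w _ assms(3,4)] by blast
qed

lemma abs_fst_measurable: "(\<lambda>(u, v). \<bar>u\<bar>) \<in> borel_measurable (lborel :: (real \<times> real) measure)"
  unfolding measurable_lborel2 by (rule borel_measurable_borel_prod) measurable

lemma abs_snd_measurable: "(\<lambda>(u, v). \<bar>v\<bar>) \<in> borel_measurable (lborel :: (real \<times> real) measure)"
  unfolding measurable_lborel2 by (rule borel_measurable_borel_prod) measurable

lemma BY0_integrable: "integrable lborel (\<lambda>p. BY0 (fst p) (snd p))"
  using envelope_integrable[of BY0 "\<lambda>_ _. 1"] by simp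

lemma BY1_integrable: "integrable lborel (\<lambda>p. BY1 (fst p) (snd p))"
  using envelope_integrable[of BY1 "\<lambda>_ _. 1"] by simp

lemma BY0_integral_le: "(\<integral>p. BY0 (fst p) (snd p) \<partial>lborel) \<le> WY0"
  using weighted_envelope_integrable(2)[of BY0 "\<lambda>_ _. 1"]
    BY0_measurable BY0_nonneg BY0_weighted W_nonneg by simp

lemma BY1_integral_le: "(\<integral>p. BY1 (fst p) (snd p) \<partial>lborel) \<le> WY1"
  using weighted_envelope_integrable(2)[of BY1 "\<lambda>_ _. 1"]
    BY1_measurable BY1_nonneg BY1_weighted W_nonneg by simp

definition "perturbation_bound p = \<bar>fst p\<bar> * BY1 (fst p) (snd p) + \<bar>snd p\<bar> * B0 (fst p) (snd p)"

lemma perturbation_bound_integrable: "integrable lborel perturbation_bound"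
  unfolding perturbation_bound_def
  using envelope_integrable[of BY1 "\<lambda>u v. \<bar>u\<bar>"] envelope_integrable[of B0 "\<lambda>u v. \<bar>v\<bar>"]
    abs_fst_measurable abs_snd_measurable by simp

lemma perturbation_bound_integral_le: "integral\<^sup>L lborel perturbation_bound \<le> WY1 + W0"
proof -
  have "integral\<^sup>L lborel perturbation_bound
      = (\<integral>p. \<bar>fst p\<bar> * BY1 (fst p) (snd p) \<partial>lborel) + (\<integral>p. \<bar>snd p\<bar> * B0 (fst p) (snd p) \<partial>lborel)"
    unfolding perturbation_bound_def
    using envelope_integrable[of BY1 "\<lambda>u v. \<bar>u\<bar>"] envelope_integrable[of B0 "\<lambda>u v. \<bar>v\<bar>"]
      abs_fst_measurable abs_snd_measurable by simp
  also have "\<dots> \<le> WY1 + W0"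
    using weighted_envelope_integrable(2)[of BY1 "\<lambda>u v. \<bar>u\<bar>"] weighted_envelope_integrable(2)[of B0 "\<lambda>u v. \<bar>v\<bar>"]
      abs_fst_measurable abs_snd_measurable BY1_measurable B0_measurable BY1_nonneg B0_nonneg
      BY1_weighted B0_weighted W_nonneg
    by (intro add_mono) simp_all
  finally show ?thesis .
qed

text \<open>\<open>sub_density c y\<close> is the density of \<open>\<mu> + c \<eta>\<close> restricted to the event \<open>\<pi> + c \<gamma> \<le> y\<close>.\<close>

definition "sub_density c y x = (\<integral>p. HY (x - c * fst p) (fst p) (y - c * snd p) (snd p) \<partial>lborel)"

lemma shifted_HY_integrable:
  "integrable lborel (\<lambda>p::real \<times> real. HY (x - c * fst p) (fst p) (y - c * snd p) (snd p))"
  by (rule Bochner_Integration.integrable_bound[OF BY0_integrable])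
    (simp only: measurable_lborel2, rule borel_measurable_borel_prod, measurable,
      auto simp: HY_nonneg BY0_nonneg HY_le)

lemma sub_density_nonneg: "0 \<le> sub_density c y x"
  unfolding sub_density_def by (rule integral_nonneg_AE) (simp add: HY_nonneg)

lemma sub_density_le: "sub_density c y x \<le> WY0"
proof -
  have "sub_density c y x \<le> (\<integral>p. BY0 (fst p) (snd p) \<partial>lborel)"
    unfolding sub_density_def
    by (rule integral_mono[OF shifted_HY_integrable BY0_integrable]) (simp add: HY_le)
  also note BY0_integral_le
  finally show ?thesis .
qed

lemma sub_density_lipschitz: "\<bar>sub_density c y x1 - sub_density c y x2\<bar> \<le> WY1 * \<bar>x1 - x2\<bar>"
proof -
  have "\<bar>sub_density c y x1 - sub_density c y x2\<bar> \<le> (\<integral>p. BY1 (fst p) (snd p) * \<bar>x1 - x2\<bar> \<partial>lborel)"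
    unfolding sub_density_def
    using HY_lipschitz_x[of "x1 - c * fst p" "fst p" "y - c * snd p" "snd p" "x2 - c * fst p" for p]
    by (intro abs_integral_diff_le shifted_HY_integrable integrable_mult_left BY1_integrable) simp
  also have "\<dots> \<le> WY1 * \<bar>x1 - x2\<bar>"
    using BY1_integral_le by (simp add: mult_right_mono)
  finally show ?thesis .
qed

text \<open>Moving from \<open>c = 0\<close> to \<open>c\<close> shifts the arguments \<open>x\<close> and \<open>y\<close> of \<open>HY\<close> by \<open>c u\<close> and
  \<open>c v\<close>, which costs \<open>\<bar>c u\<bar> BY1 + \<bar>c v\<bar> B0\<close> pointwise.\<close>

lemma sub_density_perturbation: "\<bar>sub_density c y x - sub_density 0 y x\<bar> \<le> \<bar>c\<bar> * (WY1 + W0)"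
proof -
  have pointwise: "\<bar>HY (x - c * u) u (y - c * v) v - HY x u y v\<bar> \<le> \<bar>c\<bar> * perturbation_bound (u, v)"
    for u v
  proof -
    have "\<bar>HY (x - c * u) u (y - c * v) v - HY x u (y - c * v) v\<bar> \<le> BY1 u v * \<bar>c * u\<bar>"
      using HY_lipschitz_x[of "x - c * u" u "y - c * v" v x] by simp
    moreover have "\<bar>HY x u (y - c * v) v - HY x u y v\<bar> \<le> B0 u v * \<bar>c * v\<bar>"
      using HY_lipschitz_y[of x u "y - c * v" v y] by simp
    ultimately have "\<bar>HY (x - c * u) u (y - c * v) v - HY x u y v\<bar> \<le> BY1 u v * \<bar>c * u\<bar> + B0 u v * \<bar>c * v\<bar>"
      by linarith
    then show ?thesis
      unfolding perturbation_bound_def by (simp add: abs_mult algebra_simps)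
  qed
  have "\<bar>sub_density c y x - sub_density 0 y x\<bar> \<le> (\<integral>p. \<bar>c\<bar> * perturbation_bound p \<partial>lborel)"
    unfolding sub_density_def using pointwise
    by (intro abs_integral_diff_le shifted_HY_integrable integrable_mult_right
        perturbation_bound_integrable) auto
  also have "\<dots> \<le> \<bar>c\<bar> * (WY1 + W0)"
    using perturbation_bound_integral_le by (simp add: mult_left_mono)
  finally show ?thesis .
qed

definition "joint_density w = ennreal (H (fst w) (fst (snd w)) (fst (snd (snd w))) (snd (snd (snd w))))"

lemma joint_density_eq: "(\<lambda>(x, u, y, v). ennreal (H x u y v)) = joint_density"
  unfolding joint_density_def by (auto simp: fun_eq_iff split: prod.splits)

lemma joint_density_measurable[measurable]: "joint_density \<in> borel_measurable borel"
  unfolding joint_density_def by (simp add: borel_prod[symmetric]) measurable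

lemma emeasure_joint_event:
  assumes S: "S \<in> sets borel"
  shows "emeasure P {z \<in> space P. (\<mu> z, \<eta> z, \<pi> z, \<gamma> z) \<in> S} = (\<integral>\<^sup>+w. joint_density w * indicator S w \<partial>lborel)"
proof -
  have X: "(\<lambda>z. (\<mu> z, \<eta> z, \<pi> z, \<gamma> z)) \<in> measurable P lborel"
    using distributed_measurable[OF distributed] .
  have "{z \<in> space P. (\<mu> z, \<eta> z, \<pi> z, \<gamma> z) \<in> S} = (\<lambda>z. (\<mu> z, \<eta> z, \<pi> z, \<gamma> z)) -` S \<inter> space P"
    by auto
  then have "emeasure P {z \<in> space P. (\<mu> z, \<eta> z, \<pi> z, \<gamma> z) \<in> S}
      = emeasure (distr P lborel (\<lambda>z. (\<mu> z, \<eta> z, \<pi> z, \<gamma> z))) S"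
    using S by (simp add: emeasure_distr[OF X])
  also have "\<dots> = emeasure (density lborel joint_density) S"
    using distributed_distr_eq_density[OF distributed] by (simp add: joint_density_eq)
  also have "\<dots> = (\<integral>\<^sup>+w. joint_density w * indicator S w \<partial>lborel)"
    using S by (simp add: emeasure_density)
  finally show ?thesis .
qed

lemma nn_integral_joint_density_iterated:
  assumes [measurable]: "g \<in> borel_measurable (borel \<Otimes>\<^sub>M (borel \<Otimes>\<^sub>M (borel \<Otimes>\<^sub>M borel)))"
  shows "(\<integral>\<^sup>+w. joint_density w * g w \<partial>lborel)
    = (\<integral>\<^sup>+x. \<integral>\<^sup>+u. \<integral>\<^sup>+v. \<integral>\<^sup>+y. ennreal (H x u y v) * g (x, u, y, v) \<partial>lborel \<partial>lborel \<partial>lborel \<partial>lborel)"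
proof -
  have "(\<lambda>w. joint_density w * g w) \<in> borel_measurable borel"
    unfolding joint_density_def by (simp add: borel_prod[symmetric]) measurable
  then have "(\<integral>\<^sup>+w. joint_density w * g w \<partial>lborel)
      = (\<integral>\<^sup>+x. \<integral>\<^sup>+u. \<integral>\<^sup>+y. \<integral>\<^sup>+v. ennreal (H x u y v) * g (x, u, y, v) \<partial>lborel \<partial>lborel \<partial>lborel \<partial>lborel)"
    by (subst nn_integral_lborel_quadruple) (simp_all add: joint_density_def)
  also have "\<dots> = (\<integral>\<^sup>+x. \<integral>\<^sup>+u. \<integral>\<^sup>+v. \<integral>\<^sup>+y. ennreal (H x u y v) * g (x, u, y, v) \<partial>lborel \<partial>lborel \<partial>lborel \<partial>lborel)"
  proof (rule nn_integral_cong, rule nn_integral_cong)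
    fix x u :: real
    have "(\<lambda>(y, v). ennreal (H x u y v) * g (x, u, y, v)) \<in> borel_measurable (lborel \<Otimes>\<^sub>M lborel)"
      by (rule borel_measurable_lborel_prod) measurable
    then show "(\<integral>\<^sup>+y. \<integral>\<^sup>+v. ennreal (H x u y v) * g (x, u, y, v) \<partial>lborel \<partial>lborel)
        = (\<integral>\<^sup>+v. \<integral>\<^sup>+y. ennreal (H x u y v) * g (x, u, y, v) \<partial>lborel \<partial>lborel)"
      by (rule lborel_pair.Fubini'[symmetric])
  qed
  finally show ?thesis .
qed

lemma iterated_H_mass_eq_1: "(\<integral>\<^sup>+x. \<integral>\<^sup>+u. \<integral>\<^sup>+v. H_mass x u v \<partial>lborel \<partial>lborel \<partial>lborel) = 1"
proof -
  have "1 = emeasure P {z \<in> space P. (\<mu> z, \<eta> z, \<pi> z, \<gamma> z) \<in> UNIV}"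
    using prob_space.emeasure_space_1[OF P_prob_space] by simp
  also have "\<dots> = (\<integral>\<^sup>+w. joint_density w * (\<lambda>_. 1) w \<partial>lborel)"
    by (subst emeasure_joint_event) simp_all
  also have "\<dots> = (\<integral>\<^sup>+x. \<integral>\<^sup>+u. \<integral>\<^sup>+v. H_mass x u v \<partial>lborel \<partial>lborel \<partial>lborel)"
    by (subst nn_integral_joint_density_iterated) (simp_all add: H_mass_def[abs_def])
  finally show ?thesis by simp
qed

text \<open>\<open>HY_ennreal\<close> and \<open>HY\<close> differ only where \<open>H_mass = \<infinity>\<close>, a null set since the total mass
  is \<open>1\<close>.\<close>

lemma iterated_HY_ennreal_eq_HY:
  "(\<integral>\<^sup>+x. \<integral>\<^sup>+u. \<integral>\<^sup>+v. \<phi> x u v * HY_ennreal x u (Y x u v) v \<partial>lborel \<partial>lborel \<partial>lborel)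
    = (\<integral>\<^sup>+x. \<integral>\<^sup>+u. \<integral>\<^sup>+v. \<phi> x u v * ennreal (HY x u (Y x u v) v) \<partial>lborel \<partial>lborel \<partial>lborel)"
proof (rule nn_integral_cong_where_finite)
  show "(\<lambda>x. \<integral>\<^sup>+u. \<integral>\<^sup>+v. H_mass x u v \<partial>lborel \<partial>lborel) \<in> borel_measurable lborel"
    by simp measurable
  show "(\<integral>\<^sup>+x. \<integral>\<^sup>+u. \<integral>\<^sup>+v. H_mass x u v \<partial>lborel \<partial>lborel \<partial>lborel) \<noteq> \<infinity>"
    using iterated_H_mass_eq_1 by simp
  fix x
  assume "(\<integral>\<^sup>+u. \<integral>\<^sup>+v. H_mass x u v \<partial>lborel \<partial>lborel) \<noteq> \<infinity>"
  then show "(\<integral>\<^sup>+u. \<integral>\<^sup>+v. \<phi> x u v * HY_ennreal x u (Y x u v) v \<partial>lborel \<partial>lborel)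
      = (\<integral>\<^sup>+u. \<integral>\<^sup>+v. \<phi> x u v * ennreal (HY x u (Y x u v) v) \<partial>lborel \<partial>lborel)"
  proof (rule nn_integral_cong_where_finite[rotated])
    fix u
    assume "(\<integral>\<^sup>+v. H_mass x u v \<partial>lborel) \<noteq> \<infinity>"
    then show "(\<integral>\<^sup>+v. \<phi> x u v * HY_ennreal x u (Y x u v) v \<partial>lborel)
        = (\<integral>\<^sup>+v. \<phi> x u v * ennreal (HY x u (Y x u v) v) \<partial>lborel)"
      by (rule nn_integral_cong_where_finite[rotated]) (simp_all add: HY_ennreal_eq_HY, measurable)
  qed (simp, measurable)
qed

lemma iterated_window_eq_sub_density:
  assumes W[measurable]: "W \<in> sets borel"
  shows "(\<integral>\<^sup>+x. \<integral>\<^sup>+u. \<integral>\<^sup>+v. indicator W (x + c * u) * ennreal (HY x u (y - c * v) v) \<partial>lborel \<partial>lborel \<partial>lborel)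
    = (\<integral>\<^sup>+x. indicator W x * ennreal (sub_density c y x) \<partial>lborel)"
proof -
  have "(\<integral>\<^sup>+x. \<integral>\<^sup>+u. \<integral>\<^sup>+v. indicator W (x + c * u) * ennreal (HY x u (y - c * v) v) \<partial>lborel \<partial>lborel \<partial>lborel)
      = (\<integral>\<^sup>+x. \<integral>\<^sup>+p. indicator W (x + c * fst p) * ennreal (HY x (fst p) (y - c * snd p) (snd p)) \<partial>lborel \<partial>lborel)"
    by (rule nn_integral_cong, subst nn_integral_lborel_pair)
      (simp_all, rule borel_measurable_borel_prod, measurable)
  also have "\<dots> = (\<integral>\<^sup>+p. \<integral>\<^sup>+x. indicator W (x + c * fst p) * ennreal (HY x (fst p) (y - c * snd p) (snd p)) \<partial>lborel \<partial>lborel)"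
    by (rule lborel_pair.Fubini'[symmetric]) (rule borel_measurable_lborel_prod_pair, measurable)
  also have "\<dots> = (\<integral>\<^sup>+p. \<integral>\<^sup>+x. indicator W x * ennreal (HY (x - c * fst p) (fst p) (y - c * snd p) (snd p)) \<partial>lborel \<partial>lborel)"
  proof (rule nn_integral_cong)
    fix p :: "real \<times> real"
    show "(\<integral>\<^sup>+x. indicator W (x + c * fst p) * ennreal (HY x (fst p) (y - c * snd p) (snd p)) \<partial>lborel)
        = (\<integral>\<^sup>+x. indicator W x * ennreal (HY (x - c * fst p) (fst p) (y - c * snd p) (snd p)) \<partial>lborel)"
      by (subst nn_integral_real_affine[where c=1 and t="- c * fst p"]) (simp_all, measurable)
  qed
  also have "\<dots> = (\<integral>\<^sup>+x. \<integral>\<^sup>+p. indicator W x * ennreal (HY (x - c * fst p) (fst p) (y - c * snd p) (snd p)) \<partial>lborel \<partial>lborel)"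
    by (rule lborel_pair.Fubini') (rule borel_measurable_lborel_prod_pair, measurable)
  also have "\<dots> = (\<integral>\<^sup>+x. indicator W x * ennreal (sub_density c y x) \<partial>lborel)"
  proof (rule nn_integral_cong)
    fix x :: real
    have "(\<integral>\<^sup>+p. indicator W x * ennreal (HY (x - c * fst p) (fst p) (y - c * snd p) (snd p)) \<partial>lborel)
        = indicator W x * (\<integral>\<^sup>+p. ennreal (HY (x - c * fst p) (fst p) (y - c * snd p) (snd p)) \<partial>lborel)"
      by (rule nn_integral_cmult) (simp, rule borel_measurable_borel_prod, measurable)
    also have "\<dots> = indicator W x * ennreal (sub_density c y x)"
      unfolding sub_density_def
      by (subst nn_integral_eq_integral[OF shifted_HY_integrable]) (simp_all add: HY_nonneg)
    finally show "(\<integral>\<^sup>+p. indicator W x * ennreal (HY (x - c * fst p) (fst p) (y - c * snd p) (snd p)) \<partial>lborel)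
        = indicator W x * ennreal (sub_density c y x)" .
  qed
  finally show ?thesis .
qed

lemma emeasure_perturbed_event:
  assumes W[measurable]: "W \<in> sets borel"
  shows "emeasure P {z \<in> space P. \<pi> z + c * \<gamma> z \<le> y \<and> \<mu> z + c * \<eta> z \<in> W}
    = (\<integral>\<^sup>+x. indicator W x * ennreal (sub_density c y x) \<partial>lborel)"
proof -
  define S where "S = {w :: real \<times> real \<times> real \<times> real.
    fst (snd (snd w)) + c * snd (snd (snd w)) \<le> y \<and> fst w + c * fst (snd w) \<in> W}"
  have "{w \<in> space (borel \<Otimes>\<^sub>M (borel \<Otimes>\<^sub>M (borel \<Otimes>\<^sub>M borel))).
      fst (snd (snd w)) + c * snd (snd (snd w)) \<le> y \<and> fst w + c * fst (snd w) \<in> W}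
    \<in> sets (borel \<Otimes>\<^sub>M (borel \<Otimes>\<^sub>M (borel \<Otimes>\<^sub>M (borel :: real measure))))"
    by measurable
  then have S_prod[measurable]: "S \<in> sets (borel \<Otimes>\<^sub>M (borel \<Otimes>\<^sub>M (borel \<Otimes>\<^sub>M (borel :: real measure))))"
    by (simp add: S_def space_pair_measure)
  then have S: "S \<in> sets borel" by (simp only: borel_prod)
  have "{z \<in> space P. \<pi> z + c * \<gamma> z \<le> y \<and> \<mu> z + c * \<eta> z \<in> W}
      = {z \<in> space P. (\<mu> z, \<eta> z, \<pi> z, \<gamma> z) \<in> S}"
    by (auto simp: S_def)
  then have "emeasure P {z \<in> space P. \<pi> z + c * \<gamma> z \<le> y \<and> \<mu> z + c * \<eta> z \<in> W}
      = (\<integral>\<^sup>+x. \<integral>\<^sup>+u. \<integral>\<^sup>+v. \<integral>\<^sup>+t. ennreal (H x u t v) * indicator S (x, u, t, v) \<partial>lborel \<partial>lborel \<partial>lborel \<partial>lborel)"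
    using emeasure_joint_event[OF S] nn_integral_joint_density_iterated[of "indicator S"] by simp
  also have "\<dots> = (\<integral>\<^sup>+x. \<integral>\<^sup>+u. \<integral>\<^sup>+v. indicator W (x + c * u) * HY_ennreal x u (y - c * v) v \<partial>lborel \<partial>lborel \<partial>lborel)"
  proof (rule nn_integral_cong, rule nn_integral_cong, rule nn_integral_cong)
    fix x u v :: real
    have "(\<integral>\<^sup>+t. ennreal (H x u t v) * indicator S (x, u, t, v) \<partial>lborel)
        = (\<integral>\<^sup>+t. indicator W (x + c * u) * (indicator {..y - c * v} t * ennreal (H x u t v)) \<partial>lborel)"
      by (intro nn_integral_cong) (auto simp: S_def indicator_def algebra_simps)
    also have "\<dots> = indicator W (x + c * u) * HY_ennreal x u (y - c * v) v"
      unfolding HY_ennreal_def by (rule nn_integral_cmult) measurable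
    finally show "(\<integral>\<^sup>+t. ennreal (H x u t v) * indicator S (x, u, t, v) \<partial>lborel)
        = indicator W (x + c * u) * HY_ennreal x u (y - c * v) v" .
  qed
  also have "\<dots> = (\<integral>\<^sup>+x. indicator W x * ennreal (sub_density c y x) \<partial>lborel)"
    unfolding iterated_HY_ennreal_eq_HY by (rule iterated_window_eq_sub_density[OF W])
  finally show ?thesis .
qed

lemma finite_measure_P: "finite_measure P"
  using P_prob_space by (simp add: prob_space_def)

lemma components_measurable[measurable]:
  "\<mu> \<in> borel_measurable P" "\<eta> \<in> borel_measurable P" "\<pi> \<in> borel_measurable P" "\<gamma> \<in> borel_measurable P"
proof -
  have "(\<lambda>z. (\<mu> z, \<eta> z, \<pi> z, \<gamma> z)) \<in> P \<rightarrow>\<^sub>M (borel \<Otimes>\<^sub>M (borel \<Otimes>\<^sub>M (borel \<Otimes>\<^sub>M borel)))"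
    using distributed_measurable[OF distributed] by (simp add: borel_prod)
  then show "\<mu> \<in> borel_measurable P" "\<eta> \<in> borel_measurable P" "\<pi> \<in> borel_measurable P" "\<gamma> \<in> borel_measurable P"
    by (simp_all add: measurable_pair_iff comp_def)
qed

definition "window_num c y q e = measure P {z \<in> space P. \<pi> z + c * \<gamma> z \<le> y \<and> \<bar>\<mu> z + c * \<eta> z - q\<bar> \<le> e}"
definition "window_den c q e = measure P {z \<in> space P. \<bar>\<mu> z + c * \<eta> z - q\<bar> \<le> e}"

lemma window_num_estimate:
  assumes e: "0 < e"
  shows "\<bar>window_num c y q e - 2 * e * sub_density c y q\<bar> \<le> 2 * WY1 * e * e"
proof (rule nn_integral_interval_lipschitz[OF e sub_density_nonneg W_nonneg(3) sub_density_lipschitz])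
  have "{z \<in> space P. \<pi> z + c * \<gamma> z \<le> y \<and> \<bar>\<mu> z + c * \<eta> z - q\<bar> \<le> e}
      = {z \<in> space P. \<pi> z + c * \<gamma> z \<le> y \<and> \<mu> z + c * \<eta> z \<in> {q - e..q + e}}"
    by (auto simp: abs_le_iff)
  then show "ennreal (window_num c y q e)
      = (\<integral>\<^sup>+x. indicator {q - e..q + e} x * ennreal (sub_density c y x) \<partial>lborel)"
    unfolding window_num_def
    using emeasure_perturbed_event[of "{q - e..q + e}" c y] finite_measure.emeasure_eq_measure[OF finite_measure_P]
    by simp
  show "0 \<le> window_num c y q e" unfolding window_num_def by simp
qed

text \<open>The density of \<open>\<mu> + c \<eta>\<close> itself is the increasing limit of \<open>sub_density c y\<close> as \<open>y \<rightarrow> \<infinity>\<close>.\<close>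

definition "marginal_density c x = (SUP k::nat. sub_density c (real k) x)"

lemma sub_density_le_marginal_density: "sub_density c (real k) x \<le> marginal_density c x"
  unfolding marginal_density_def using sub_density_le
  by (intro cSUP_upper bdd_aboveI[of _ WY0]) auto

lemma window_num_tendsto_window_den: "(\<lambda>k::nat. window_num c (real k) q e) \<longlonglongrightarrow> window_den c q e"
proof -
  define A where "A k = {z \<in> space P. \<pi> z + c * \<gamma> z \<le> real k \<and> \<bar>\<mu> z + c * \<eta> z - q\<bar> \<le> e}" for k :: nat
  have "range A \<subseteq> sets P" unfolding A_def by auto
  moreover have "incseq A" unfolding A_def incseq_def by auto
  ultimately have "(\<lambda>k. measure P (A k)) \<longlonglongrightarrow> measure P (\<Union>k. A k)"
    by (rule finite_measure.finite_Lim_measure_incseq[OF finite_measure_P])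
  moreover have "(\<Union>k. A k) = {z \<in> space P. \<bar>\<mu> z + c * \<eta> z - q\<bar> \<le> e}"
    unfolding A_def by (auto intro: real_arch_simple)
  ultimately show ?thesis unfolding window_num_def window_den_def A_def by simp
qed

lemma window_num_le_window_den: "window_num c y q e \<le> window_den c q e"
  unfolding window_num_def window_den_def
  by (rule finite_measure.finite_measure_mono[OF finite_measure_P]) (auto, measurable)

lemma window_den_estimate:
  assumes e: "0 < e"
  shows "\<bar>window_den c q e - 2 * e * marginal_density c q\<bar> \<le> 2 * WY1 * e * e"
proof -
  have "window_num c (real k) q e \<le> 2 * e * marginal_density c q + 2 * WY1 * e * e" for k
  proof -
    have "window_num c (real k) q e \<le> 2 * e * sub_density c (real k) q + 2 * WY1 * e * e"
      using window_num_estimate[OF e, of c "real k" q] by (simp add: abs_le_iff)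
    also have "\<dots> \<le> 2 * e * marginal_density c q + 2 * WY1 * e * e"
      using sub_density_le_marginal_density[of c k q] e by simp
    finally show ?thesis .
  qed
  then have upper: "window_den c q e \<le> 2 * e * marginal_density c q + 2 * WY1 * e * e"
    by (intro LIMSEQ_le_const2[OF window_num_tendsto_window_den]) auto
  have "sub_density c (real k) q \<le> (window_den c q e + 2 * WY1 * e * e) / (2 * e)" for k
    using window_num_estimate[OF e, of c "real k" q] window_num_le_window_den[of c "real k" q e] e
    by (simp add: abs_le_iff field_simps)
  then have "marginal_density c q \<le> (window_den c q e + 2 * WY1 * e * e) / (2 * e)"
    unfolding marginal_density_def by (intro cSUP_least) auto
  then have lower: "2 * e * marginal_density c q \<le> window_den c q e + 2 * WY1 * e * e"
    using e by (simp add: field_simps)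
  show ?thesis using upper lower by (simp add: abs_le_iff)
qed

lemma cond_prob_at_perturbed:
  assumes "marginal_density c q \<noteq> 0"
  shows "cond_prob_at P (\<lambda>z. \<mu> z + c * \<eta> z) (\<lambda>z. \<pi> z + c * \<gamma> z) q y
    = sub_density c y q / marginal_density c q"
proof -
  have "((\<lambda>e. (window_num c y q e / (2 * e)) / (window_den c q e / (2 * e)))
      \<longlongrightarrow> sub_density c y q / marginal_density c q) (at_right 0)"
    using tendsto_window_average[OF window_num_estimate] tendsto_window_average[OF window_den_estimate] assms
    by (intro tendsto_divide) auto
  moreover have "eventually (\<lambda>e. (window_num c y q e / (2 * e)) / (window_den c q e / (2 * e))
      = window_num c y q e / window_den c q e) (at_right 0)"
    by (rule eventually_mono[OF eventually_at_right_less]) simp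
  ultimately have "((\<lambda>e. window_num c y q e / window_den c q e)
      \<longlongrightarrow> sub_density c y q / marginal_density c q) (at_right 0)"
    by (rule Lim_transform_eventually)
  then show ?thesis
    unfolding cond_prob_at_def window_num_def window_den_def by (intro tendsto_Lim) auto
qed

lemma marginal_density_perturbation: "\<bar>marginal_density c q - marginal_density 0 q\<bar> \<le> \<bar>c\<bar> * (WY1 + W0)"
proof -
  have "marginal_density c1 q \<le> marginal_density c2 q + \<bar>c\<bar> * (WY1 + W0)"
    if "\<And>y. \<bar>sub_density c1 y q - sub_density c2 y q\<bar> \<le> \<bar>c\<bar> * (WY1 + W0)" for c1 c2
    unfolding marginal_density_def[of c1]
  proof (rule cSUP_least)
    fix k :: nat
    show "sub_density c1 (real k) q \<le> marginal_density c2 q + \<bar>c\<bar> * (WY1 + W0)"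
      using that[of "real k"] sub_density_le_marginal_density[of c2 k q] by (simp add: abs_le_iff)
  qed simp
  from this[of c 0] this[of 0 c] show ?thesis
    using sub_density_perturbation[of c _ q] by (force simp: abs_le_iff abs_minus_commute)
qed

lemma cond_prob_at_perturbation_le:
  assumes f0: "0 < f0"
    and density_at_q: "((\<lambda>e. measure P {z \<in> space P. \<bar>\<mu> z - q\<bar> \<le> e} / (2 * e)) \<longlongrightarrow> f0) (at_right 0)"
    and c: "0 < c" "c * (WY1 + W0) \<le> f0 / 2"
  shows "\<bar>cond_prob_at P (\<lambda>z. \<mu> z + c * \<eta> z) (\<lambda>z. \<pi> z + c * \<gamma> z) q y - cond_prob_at P \<mu> \<pi> q y\<bar>
    \<le> c * (WY1 + W0) * (2 / f0 + 2 * WY0 / (f0 * f0))"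
proof -
  have "((\<lambda>e. window_den 0 q e / (2 * e)) \<longlongrightarrow> f0) (at_right 0)"
    using density_at_q unfolding window_den_def by simp
  then have marginal_0: "marginal_density 0 q = f0"
    using tendsto_window_average[OF window_den_estimate, of 0 q]
    by (intro tendsto_unique[of "at_right 0"]) auto
  have "cond_prob_at P \<mu> \<pi> q y = sub_density 0 y q / f0"
    using cond_prob_at_perturbed[of 0 q y] marginal_0 f0 by simp
  moreover have marginal_c: "\<bar>marginal_density c q - f0\<bar> \<le> c * (WY1 + W0)"
    using marginal_density_perturbation[of c q] marginal_0 c by simp
  moreover have "marginal_density c q \<noteq> 0"
    using marginal_c c f0 by (auto simp: abs_le_iff)
  then have "cond_prob_at P (\<lambda>z. \<mu> z + c * \<eta> z) (\<lambda>z. \<pi> z + c * \<gamma> z) q y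
      = sub_density c y q / marginal_density c q"
    by (rule cond_prob_at_perturbed)
  moreover have "\<bar>sub_density c y q - sub_density 0 y q\<bar> \<le> c * (WY1 + W0)"
    using sub_density_perturbation[of c y q] c by simp
  ultimately show ?thesis
    using abs_quotient_diff_le[OF f0 _ c(2) sub_density_nonneg sub_density_le] by simp
qed

end

theorem lemma4:
  fixes P :: "(real^'d) measure" and Q :: "'w measure"
    and \<mu> \<pi> :: "real^'d \<Rightarrow> real"
    and \<mu>t \<pi>t :: "nat \<Rightarrow> 'w \<Rightarrow> real^'d \<Rightarrow> real"
    and \<alpha> \<beta> q \<theta> :: real and a :: "nat \<Rightarrow> real"
    and h :: "nat \<Rightarrow> 'w \<Rightarrow> real \<Rightarrow> real \<Rightarrow> real \<Rightarrow> real \<Rightarrow> real"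
    and hb0 hb1 hb2 hbY0 hbY1 hbY2 hbX0 hbX1 :: "nat \<Rightarrow> real \<Rightarrow> real \<Rightarrow> real"
  assumes P: "prob_space P" "sets P = sets borel"
    and Q: "prob_space Q"
    and meas: "\<mu> \<in> borel_measurable P" "\<pi> \<in> borel_measurable P"
      "\<And>m \<omega>. \<mu>t m \<omega> \<in> borel_measurable P" "\<And>m \<omega>. \<pi>t m \<omega> \<in> borel_measurable P"
    and \<alpha>: "0 < \<alpha>" "\<alpha> < 1" and \<beta>: "0 < \<beta>" "\<beta> < 1"
    and q: "measure P {z \<in> space P. \<mu> z \<le> q} = \<alpha>"
    and dens_q: "\<exists>f0>0. ((\<lambda>\<epsilon>. measure P {z \<in> space P. \<bar>\<mu> z - q\<bar> \<le> \<epsilon>} / (2 * \<epsilon>)) \<longlongrightarrow> f0) (at_right 0)"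
    and \<theta>: "cond_prob_at P \<mu> \<pi> q \<theta> = \<beta>"
    \<comment> \<open>Assumption (A)\<close>
    and a_pos: "\<forall>\<^sub>F m in sequentially. a m > 0"
    and a_lim: "a \<longlonglongrightarrow> 0"
    and A_mu: "bigO_P Q (\<lambda>m \<omega>. ess_norm P (\<lambda>z. \<mu>t m \<omega> z - \<mu> z)) a"
    and A_pi: "bigO_P Q (\<lambda>m \<omega>. ess_norm P (\<lambda>z. \<pi>t m \<omega> z - \<pi> z)) a"
    \<comment> \<open>(R3)\<close>
    and R3_dens: "\<forall>\<^sub>F m in sequentially. \<forall>\<omega>\<in>space Q.
        distributed P lborel
          (\<lambda>z. (\<mu> z, (\<mu>t m \<omega> z - \<mu> z) / a m, \<pi> z, (\<pi>t m \<omega> z - \<pi> z) / a m))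
          (\<lambda>(x, u, y, v). ennreal (h m \<omega> x u y v))
        \<and> (\<forall>x u y v. 0 \<le> h m \<omega> x u y v)"
    and R3_diff: "\<forall>\<^sub>F m in sequentially. \<forall>\<omega>\<in>space Q. \<forall>x u y v.
        (\<lambda>x'. h m \<omega> x' u y v) differentiable at x
      \<and> (\<lambda>y'. h m \<omega> x u y' v) differentiable at y
      \<and> (\<lambda>x'. LINT t:{..y}|lborel. h m \<omega> x' u t v) differentiable at x
      \<and> (\<lambda>x'. deriv (\<lambda>x''. LINT t:{..y}|lborel. h m \<omega> x'' u t v) x') differentiable at x"
    and R3_bnd: "\<forall>\<^sub>F m in sequentially. \<forall>\<omega>\<in>space Q. \<forall>x u y v.
        h m \<omega> x u y v \<le> hb0 m u v
      \<and> \<bar>deriv (\<lambda>x'. h m \<omega> x' u y v) x\<bar> \<le> hb1 m u v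
      \<and> \<bar>deriv (\<lambda>y'. h m \<omega> x u y' v) y\<bar> \<le> hb2 m u v
      \<and> (LINT t:{..y}|lborel. h m \<omega> x u t v) \<le> hbY0 m u v
      \<and> \<bar>deriv (\<lambda>x'. LINT t:{..y}|lborel. h m \<omega> x' u t v) x\<bar> \<le> hbY1 m u v
      \<and> \<bar>deriv (deriv (\<lambda>x'. LINT t:{..y}|lborel. h m \<omega> x' u t v)) x\<bar> \<le> hbY2 m u v"
    and R3_int: "\<And>hb. hb \<in> {hb0, hb1, hb2, hbY0, hbY1, hbY2} \<Longrightarrow>
        (\<forall>m u v. 0 \<le> hb m u v) \<and> (\<forall>m. (\<lambda>(u, v). hb m u v) \<in> borel_measurable lborel)
      \<and> (\<forall>r\<in>{1::nat, 2}. \<exists>C::real. \<forall>m.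
           (\<integral>\<^sup>+ (u, v). ennreal ((1 + \<bar>u\<bar> + \<bar>v\<bar>) ^ r * hb m u v) \<partial>lborel) \<le> ennreal C)"
    \<comment> \<open>(R4)\<close>
    and R4_diff: "\<forall>\<^sub>F m in sequentially. \<forall>\<omega>\<in>space Q. \<forall>x u y v.
        (\<lambda>y'. LINT s:{..x}|lborel. h m \<omega> s u y' v) differentiable at y"
    and R4_bnd: "\<forall>\<^sub>F m in sequentially. \<forall>\<omega>\<in>space Q. \<forall>x u y v.
        (LINT s:{..x}|lborel. h m \<omega> s u y v) \<le> hbX0 m u v
      \<and> \<bar>deriv (\<lambda>y'. LINT s:{..x}|lborel. h m \<omega> s u y' v) y\<bar> \<le> hbX1 m u v"
    and R4_int: "\<And>hb. hb \<in> {hbX0, hbX1} \<Longrightarrow>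
        (\<forall>m u v. 0 \<le> hb m u v) \<and> (\<forall>m. (\<lambda>(u, v). hb m u v) \<in> borel_measurable lborel)
      \<and> (\<exists>C::real. \<forall>m.
           (\<integral>\<^sup>+ (u, v). ennreal ((1 + \<bar>u\<bar> + \<bar>v\<bar>) * hb m u v) \<partial>lborel) \<le> ennreal C)"
  shows "bigO_P Q (\<lambda>m \<omega>. ereal (cond_prob_at P (\<mu>t m \<omega>) (\<pi>t m \<omega>) q \<theta>
                                   - cond_prob_at P \<mu> \<pi> q \<theta>)) a"
proof -
  obtain f0 where f0: "0 < f0"
    and density_at_q: "((\<lambda>\<epsilon>. measure P {z \<in> space P. \<bar>\<mu> z - q\<bar> \<le> \<epsilon>} / (2 * \<epsilon>)) \<longlongrightarrow> f0) (at_right 0)"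
    using dens_q by blast
  obtain W0 where W0: "0 \<le> W0" "\<And>m. (\<lambda>(u, v). hb0 m u v) \<in> borel_measurable lborel"
    "\<And>m. (\<integral>\<^sup>+ (u, v). ennreal ((1 + \<bar>u\<bar> + \<bar>v\<bar>) * hb0 m u v) \<partial>lborel) \<le> ennreal W0"
    by (rule uniform_weighted_envelope[OF R3_int[of hb0]]) auto
  obtain WY0 where WY0: "0 \<le> WY0" "\<And>m. (\<lambda>(u, v). hbY0 m u v) \<in> borel_measurable lborel"
    "\<And>m. (\<integral>\<^sup>+ (u, v). ennreal ((1 + \<bar>u\<bar> + \<bar>v\<bar>) * hbY0 m u v) \<partial>lborel) \<le> ennreal WY0"
    by (rule uniform_weighted_envelope[OF R3_int[of hbY0]]) auto
  obtain WY1 where WY1: "0 \<le> WY1" "\<And>m. (\<lambda>(u, v). hbY1 m u v) \<in> borel_measurable lborel"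
    "\<And>m. (\<integral>\<^sup>+ (u, v). ennreal ((1 + \<bar>u\<bar> + \<bar>v\<bar>) * hbY1 m u v) \<partial>lborel) \<le> ennreal WY1"
    by (rule uniform_weighted_envelope[OF R3_int[of hbY1]]) auto
  define C where "C = (WY1 + W0) * (2 / f0 + 2 * WY0 / (f0 * f0))"
  have "(\<lambda>m. a m * (WY1 + W0)) \<longlonglongrightarrow> 0 * (WY1 + W0)"
    by (intro tendsto_intros a_lim)
  then have "\<forall>\<^sub>F m in sequentially. a m * (WY1 + W0) < f0 / 2"
    using f0 by (intro order_tendstoD(2)) auto
  then have "\<forall>\<^sub>F m in sequentially. \<forall>\<omega>\<in>space Q.
      \<bar>ereal (cond_prob_at P (\<mu>t m \<omega>) (\<pi>t m \<omega>) q \<theta> - cond_prob_at P \<mu> \<pi> q \<theta>)\<bar> \<le> ereal (C * a m)"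
    using a_pos R3_dens R3_diff R3_bnd
  proof eventually_elim
    case (elim m)
    show ?case
    proof
      fix \<omega> assume \<omega>: "\<omega> \<in> space Q"
      interpret joint_density_perturbation P \<mu> "\<lambda>z. (\<mu>t m \<omega> z - \<mu> z) / a m" \<pi>
        "\<lambda>z. (\<pi>t m \<omega> z - \<pi> z) / a m" "h m \<omega>" "hb0 m" "hbY0 m" "hbY1 m" W0 WY0 WY1
        using bspec[OF elim(3) \<omega>] bspec[OF elim(4) \<omega>] bspec[OF elim(5) \<omega>]
        by (intro joint_density_perturbation.intro) (simp_all add: P(1) W0 WY0 WY1 del: measurable_lborel2)
      have "(\<lambda>z. \<mu> z + a m * ((\<mu>t m \<omega> z - \<mu> z) / a m)) = \<mu>t m \<omega>"
        "(\<lambda>z. \<pi> z + a m * ((\<pi>t m \<omega> z - \<pi> z) / a m)) = \<pi>t m \<omega>"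
        using elim(2) by (simp_all add: fun_eq_iff)
      then show "\<bar>ereal (cond_prob_at P (\<mu>t m \<omega>) (\<pi>t m \<omega>) q \<theta> - cond_prob_at P \<mu> \<pi> q \<theta>)\<bar> \<le> ereal (C * a m)"
        using cond_prob_at_perturbation_le[OF f0 density_at_q, of "a m" \<theta>] elim(1,2)
        by (simp add: C_def mult_ac)
    qed
  qed
  then show ?thesis by (rule bigO_P_if_eventually_le)
qed

end
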